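(* Let $ABC$ be a triangle with circumcenter $O$, nine-point center $N$ and orthocenter $H$. Let $A^*, B^*, C^*$ be the feet of the perpendiculars from $O$ to the lines $AH, BH, CH$ respectively. Then the Steiner line of $O$ with respect to triangle $A^*B^*C^*$ is the Euler line of triangle $A^*B^*C^*$.
   Context: $O$ lies on the circumcircle of $A^*B^*C^*$ (the circle with diameter $OH$). For a point $X$ on the circumcircle of a triangle, the reflections of $X$ over the three sidelines are collinear; the line containing them is the Steiner line of $X$ with respect to the triangle. *)

theory Defs
  imports "HOL-Analysis.Analysis"
begin

type_synonym point = "real ^ 2"

definition circumcenter :: "point \<Rightarrow> point \<Rightarrow> point \<Rightarrow> point" where
  "circumcenter A B C = (THE Q. dist Q A = dist Q B \<and> dist Q B = dist Q C)"

definition orthocenter :: "point \<Rightarrow> point \<Rightarrow> point \<Rightarrow> point" where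
  "orthocenter A B C = (THE H. (H - A) \<bullet> (B - C) = 0 \<and> (H - B) \<bullet> (C - A) = 0 \<and> (H - C) \<bullet> (A - B) = 0)"

definition foot :: "point \<Rightarrow> point \<Rightarrow> point \<Rightarrow> point" where
  "foot P X Y = (THE F. F \<in> affine hull {X, Y} \<and> (P - F) \<bullet> (Y - X) = 0)"

definition reflect_line :: "point \<Rightarrow> point \<Rightarrow> point \<Rightarrow> point" where
  "reflect_line P X Y = 2 *\<^sub>R foot P X Y - P"

definition steiner_line :: "point \<Rightarrow> point \<Rightarrow> point \<Rightarrow> point \<Rightarrow> point set" where
  "steiner_line P A B C = affine hull {reflect_line P B C, reflect_line P C A, reflect_line P A B}"

definition euler_line :: "point \<Rightarrow> point \<Rightarrow> point \<Rightarrow> point set" where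
  "euler_line A B C = affine hull {circumcenter A B C, orthocenter A B C}"

end

theory Submission
  imports Defs
begin

text \<open>Put the circumcentre O at the origin of the complex plane and A, B, C at a, b, c on the
  circle |z|^2 = R, so that H = a + b + c. The altitude through A meets the circle again at
  -bc/a, hence A* is the midpoint (a - bc/a)/2 of that chord, and similarly for B*, C*.
  Each of A*, B*, C* lies at distance |ab + bc + ca| / (2|a|) from (a + b + c)/2, so the
  nine-point centre of ABC is the circumcentre of A*B*C*, and Sylvester's relation gives the
  orthocentre A* + B* + C* - (a + b + c). The foot of O on B*C* is B* C* / (a + b + c), product
  of complex numbers, and a direct computation puts twice this point, the reflection of O in
  B*C*, on the line through these two centres.\<close>

section \<open>Complex coordinates\<close>

definition complex_of :: "point \<Rightarrow> complex" where
  "complex_of x = Complex (x$1) (x$2)"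

definition point_of :: "complex \<Rightarrow> point" where
  "point_of z = (\<chi> i. if i = 1 then Re z else Im z)"

lemma complex_of_point_of [simp]: "complex_of (point_of z) = z"
  by (simp add: complex_of_def point_of_def complex_eq_iff)

lemma point_of_complex_of [simp]: "point_of (complex_of x) = x"
  by (simp add: complex_of_def point_of_def vec_eq_iff forall_2)

lemma complex_of_eq_iff [simp]: "complex_of x = complex_of y \<longleftrightarrow> x = y"
  by (metis point_of_complex_of)

lemma point_of_eq_iff [simp]: "point_of z = point_of w \<longleftrightarrow> z = w"
  by (metis complex_of_point_of)

lemma complex_of_add [simp]: "complex_of (x + y) = complex_of x + complex_of y"
  and complex_of_diff [simp]: "complex_of (x - y) = complex_of x - complex_of y"
  and complex_of_scaleR [simp]: "complex_of (t *\<^sub>R x) = of_real t * complex_of x"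
  by (simp_all add: complex_of_def complex_eq_iff)

lemma bounded_linear_complex_of: "bounded_linear complex_of"
  by (simp add: linear_conv_bounded_linear[symmetric] linearI complex_of_def complex_eq_iff)

lemma inner_complex_of: "x \<bullet> y = Re (complex_of x * cnj (complex_of y))"
  by (simp add: complex_of_def inner_vec_def sum_2)

lemma dist_complex_of: "dist x y = cmod (complex_of x - complex_of y)"
proof -
  have "(x - y) \<bullet> (x - y) = cmod (complex_of x - complex_of y) ^ 2"
    unfolding inner_complex_of complex_of_diff complex_mult_cnj by (simp add: cmod_power2)
  then show ?thesis
    by (simp add: dist_norm norm_eq_sqrt_inner)
qed

lemma complex_in_affine_hull_2_iff:
  fixes x y z :: complex
  assumes "x \<noteq> y"
  shows "z \<in> affine hull {x, y} \<longleftrightarrow> Im ((z - x) * cnj (y - x)) = 0"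
proof
  assume "z \<in> affine hull {x, y}"
  then obtain v where "z = x + v *\<^sub>R (y - x)"
    by (auto simp: affine_hull_2_alt)
  then have "z - x = of_real v * (y - x)"
    by (simp add: scaleR_conv_of_real)
  then have "(z - x) * cnj (y - x) = of_real v * ((y - x) * cnj (y - x))"
    by (simp add: mult.assoc)
  also have "\<dots> = of_real (v * cmod (y - x) ^ 2)"
    by (simp only: complex_mult_cnj cmod_power2 of_real_mult)
  finally show "Im ((z - x) * cnj (y - x)) = 0"
    by (simp only: Im_complex_of_real)
next
  assume Im0: "Im ((z - x) * cnj (y - x)) = 0"
  define w where "w = (z - x) * cnj (y - x)"
  have w: "w = of_real (Re w)"
    using Im0 by (simp add: complex_eq_iff w_def)
  have "z - x = w * (y - x) / ((y - x) * cnj (y - x))"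
    using assms by (simp add: w_def)
  also have "\<dots> = of_real (Re w / cmod (y - x) ^ 2) * (y - x)"
    by (subst w, subst complex_norm_square[symmetric]) simp
  finally have "z = x + (Re w / cmod (y - x) ^ 2) *\<^sub>R (y - x)"
    by (simp add: scaleR_conv_of_real algebra_simps)
  then show "z \<in> affine hull {x, y}"
    unfolding affine_hull_2_alt by (rule range_eqI)
qed

lemma in_affine_hull_2_iff_Im:
  assumes "X \<noteq> Y"
  shows "P \<in> affine hull {X, Y} \<longleftrightarrow>
    Im ((complex_of P - complex_of X) * cnj (complex_of Y - complex_of X)) = 0"
proof -
  have "P \<in> affine hull {X, Y} \<longleftrightarrow>
      complex_of P \<in> complex_of ` (affine hull {X, Y})"
    by (auto simp: inj_image_mem_iff inj_def)
  also have "complex_of ` (affine hull {X, Y}) = affine hull {complex_of X, complex_of Y}"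
    using affine_hull_linear_image[OF bounded_linear_complex_of, of "{X, Y}"] by simp
  finally show ?thesis
    using complex_in_affine_hull_2_iff assms by simp
qed

lemma collinear_3_iff_Im:
  "collinear {X, Y, Z} \<longleftrightarrow>
    Im ((complex_of Z - complex_of X) * cnj (complex_of Y - complex_of X)) = 0"
  by (cases "X = Y") (simp_all add: collinear_3_affine_hull in_affine_hull_2_iff_Im)

section \<open>Circumcentre, orthocentre and feet of perpendiculars\<close>

lemma complex_orthogonal_eq_0:
  fixes d u v :: complex
  assumes "Re (d * cnj u) = 0" "Re (d * cnj v) = 0" "Im (v * cnj u) \<noteq> 0"
  shows "d = 0"
proof -
  define D where "D = Im v * Re u - Re v * Im u"
  have "D \<noteq> 0"
    using assms(3) by (simp add: D_def)
  have "Re d * D = Im v * Re (d * cnj u) - Im u * Re (d * cnj v)"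
    "Im d * D = Re u * Re (d * cnj v) - Re v * Re (d * cnj u)"
    by (simp_all add: D_def algebra_simps)
  then have "Re d * D = 0" "Im d * D = 0"
    by (simp_all only: assms(1,2) mult_zero_right diff_self)
  then have "Re d = 0" "Im d = 0"
    using \<open>D \<noteq> 0\<close> by simp_all
  then show ?thesis
    by (simp add: complex_eq_iff)
qed

lemma orthogonal_triangle_sides_eq_0:
  fixes X Y Z d :: point
  assumes "\<not> collinear {X, Y, Z}" "d \<bullet> (Y - X) = 0" "d \<bullet> (Z - X) = 0"
  shows "d = 0"
proof -
  have "complex_of d = 0"
    using assms by (intro complex_orthogonal_eq_0[of _ "complex_of Y - complex_of X"
          "complex_of Z - complex_of X"]) (simp_all add: collinear_3_iff_Im inner_complex_of)
  then show ?thesis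
    by (metis point_of_complex_of complex_of_diff diff_self)
qed

lemma equidistant_imp_inner:
  fixes Q X Y :: "'a :: real_inner"
  assumes "dist Q X = dist Q Y"
  shows "2 * (Q \<bullet> (Y - X)) = Y \<bullet> Y - X \<bullet> X"
proof -
  have "(Q - X) \<bullet> (Q - X) = (Q - Y) \<bullet> (Q - Y)"
    using assms by (simp add: dist_norm norm_eq_sqrt_inner)
  then show ?thesis
    by (simp add: inner_commute algebra_simps)
qed

lemma circumcenter_eqI:
  assumes nc: "\<not> collinear {X, Y, Z}" and "dist Q X = dist Q Y" "dist Q Y = dist Q Z"
  shows "circumcenter X Y Z = Q"
  unfolding circumcenter_def
proof (rule the_equality)
  fix Q'
  assume "dist Q' X = dist Q' Y \<and> dist Q' Y = dist Q' Z"
  then have "2 * (Q' \<bullet> (Y - X)) = Y \<bullet> Y - X \<bullet> X"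
    "2 * (Q' \<bullet> (Z - X)) = Z \<bullet> Z - X \<bullet> X"
    by (metis equidistant_imp_inner)+
  moreover have "2 * (Q \<bullet> (Y - X)) = Y \<bullet> Y - X \<bullet> X"
    "2 * (Q \<bullet> (Z - X)) = Z \<bullet> Z - X \<bullet> X"
    using assms(2,3) by (metis equidistant_imp_inner)+
  ultimately have "Q' - Q = 0"
    by (intro orthogonal_triangle_sides_eq_0[OF nc]) (simp_all add: inner_diff_left)
  then show "Q' = Q" by simp
qed (use assms in simp)

lemma orthocenter_eqI:
  assumes nc: "\<not> collinear {X, Y, Z}"
    and G: "(G - X) \<bullet> (Y - Z) = 0" "(G - Y) \<bullet> (Z - X) = 0" "(G - Z) \<bullet> (X - Y) = 0"
  shows "orthocenter X Y Z = G"
  unfolding orthocenter_def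
proof (rule the_equality)
  fix H
  assume H: "(H - X) \<bullet> (Y - Z) = 0 \<and> (H - Y) \<bullet> (Z - X) = 0 \<and> (H - Z) \<bullet> (X - Y) = 0"
  have "(H - G) \<bullet> (Y - Z) = 0" "(H - G) \<bullet> (Z - X) = 0"
    using G H by (simp_all add: inner_diff_left)
  then have "(H - G) \<bullet> (Y - X) = 0" "(H - G) \<bullet> (Z - X) = 0"
    by (simp_all add: inner_diff_right)
  then have "H - G = 0"
    by (rule orthogonal_triangle_sides_eq_0[OF nc])
  then show "H = G" by simp
qed (use G in simp)

lemma orthocenter_sylvester:
  assumes nc: "\<not> collinear {X, Y, Z}" and "dist Q X = dist Q Y" "dist Q Y = dist Q Z"
  shows "orthocenter X Y Z = X + Y + Z - 2 *\<^sub>R Q"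
proof (rule orthocenter_eqI[OF nc])
  have "dist X Q = dist Y Q" "dist Y Q = dist Z Q"
    using assms(2,3) by (simp_all add: dist_commute)
  then have norms: "(X - Q) \<bullet> (X - Q) = (Y - Q) \<bullet> (Y - Q)"
    "(Y - Q) \<bullet> (Y - Q) = (Z - Q) \<bullet> (Z - Q)"
    by (simp_all add: dist_norm norm_eq_sqrt_inner)
  have diff_squares: "(U + V) \<bullet> (U - V) = U \<bullet> U - V \<bullet> V" for U V :: point
    unfolding inner_add_left inner_diff_right by (simp add: inner_commute)
  have "X + Y + Z - 2 *\<^sub>R Q - X = (Y - Q) + (Z - Q)" "Y - Z = (Y - Q) - (Z - Q)"
    "X + Y + Z - 2 *\<^sub>R Q - Y = (Z - Q) + (X - Q)" "Z - X = (Z - Q) - (X - Q)"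
    "X + Y + Z - 2 *\<^sub>R Q - Z = (X - Q) + (Y - Q)" "X - Y = (X - Q) - (Y - Q)"
    by (simp_all add: algebra_simps scaleR_2)
  then show "(X + Y + Z - 2 *\<^sub>R Q - X) \<bullet> (Y - Z) = 0"
    "(X + Y + Z - 2 *\<^sub>R Q - Y) \<bullet> (Z - X) = 0"
    "(X + Y + Z - 2 *\<^sub>R Q - Z) \<bullet> (X - Y) = 0"
    using norms by (simp_all only: diff_squares)
qed

lemma equidistant_point_exists:
  fixes X Y Z :: point
  assumes "\<not> collinear {X, Y, Z}"
  obtains Q where "dist Q X = dist Q Y" "dist Q Y = dist Q Z"
proof -
  define u where "u = complex_of Y - complex_of X"
  define v where "v = complex_of Z - complex_of X"
  define D where "D = Im v * Re u - Re v * Im u"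
  have D: "D \<noteq> 0"
    using assms unfolding collinear_3_iff_Im D_def u_def[symmetric] v_def[symmetric] by simp
  define nu where "nu = Re u ^ 2 + Im u ^ 2"
  define nv where "nv = Re v ^ 2 + Im v ^ 2"
  text \<open>Cramer's rule for 2 Re (w cnj u) = |u|^2, 2 Re (w cnj v) = |v|^2.\<close>
  define w where
    "w = Complex ((Im v * nu - Im u * nv) / (2 * D)) ((Re u * nv - Re v * nu) / (2 * D))"
  have "cmod w ^ 2 = cmod (w - u) ^ 2" "cmod w ^ 2 = cmod (w - v) ^ 2"
    unfolding cmod_power2 w_def using D
    by (simp_all add: nu_def nv_def D_def field_simps)
      (simp_all add: algebra_simps power2_eq_square)
  then have "cmod w = cmod (w - u)" "cmod w = cmod (w - v)"
    by simp_all
  then show thesis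
    by (intro that[of "point_of (complex_of X + w)"])
      (simp_all add: dist_complex_of u_def v_def algebra_simps)
qed

lemma foot_eqI:
  assumes XY: "X \<noteq> Y" and F: "F \<in> affine hull {X, Y}" "(P - F) \<bullet> (Y - X) = 0"
  shows "foot P X Y = F"
  unfolding foot_def
proof (rule the_equality)
  fix F'
  assume F': "F' \<in> affine hull {X, Y} \<and> (P - F') \<bullet> (Y - X) = 0"
  have "(complex_of F' - complex_of F) * cnj (complex_of Y - complex_of X) = 0"
    using F F' XY
    by (simp add: in_affine_hull_2_iff_Im inner_complex_of complex_eq_iff algebra_simps)
  then show "F' = F"
    using XY by simp
qed (use F in simp)

lemma affine_hull_3_eq_line:
  fixes X Y R1 R2 R3 :: "'a :: real_vector"
  assumes XY: "X \<noteq> Y"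
    and R: "R1 \<in> affine hull {X, Y}" "R2 \<in> affine hull {X, Y}" "R3 \<in> affine hull {X, Y}"
    and not_all_eq: "\<not> (R1 = R2 \<and> R2 = R3)"
  shows "affine hull {R1, R2, R3} = affine hull {X, Y}"
proof
  show "affine hull {R1, R2, R3} \<subseteq> affine hull {X, Y}"
    using R by (intro hull_minimal) auto
  have line_sub: "affine hull {X, Y} \<subseteq> affine hull {S, T}"
    if "S \<noteq> T" "S \<in> affine hull {X, Y}" "T \<in> affine hull {X, Y}" for S T
  proof -
    have "collinear (affine hull {X, Y})"
      by (simp add: collinear_affine_hull_collinear)
    moreover have "{S, T, X} \<subseteq> affine hull {X, Y}" "{S, T, Y} \<subseteq> affine hull {X, Y}"
      using that by (simp_all add: hull_inc)
    ultimately have "collinear {S, T, X}" "collinear {S, T, Y}"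
      by (simp_all add: collinear_subset)
    then have "X \<in> affine hull {S, T}" "Y \<in> affine hull {S, T}"
      using collinear_3_imp_in_affine_hull that(1) by blast+
    then show ?thesis
      by (intro hull_minimal) auto
  qed
  obtain S T where "S \<noteq> T" "S \<in> {R1, R2, R3}" "T \<in> {R1, R2, R3}"
    using not_all_eq by (metis insertCI)
  then have "affine hull {X, Y} \<subseteq> affine hull {S, T}"
    using R by (intro line_sub) auto
  also have "\<dots> \<subseteq> affine hull {R1, R2, R3}"
    using \<open>S \<in> _\<close> \<open>T \<in> _\<close> by (intro hull_mono) auto
  finally show "affine hull {X, Y} \<subseteq> affine hull {R1, R2, R3}" .
qed

section \<open>Triangles inscribed in a circle about the origin\<close>

lemma Im_eq_0_iff_cnj: "Im w = 0 \<longleftrightarrow> cnj w = w"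
  and Re_eq_0_iff_cnj: "Re w = 0 \<longleftrightarrow> cnj w = - w"
  by (simp_all add: complex_eq_iff)

definition altitude_foot :: "complex \<Rightarrow> complex \<Rightarrow> complex \<Rightarrow> complex" where
  "altitude_foot a b c = (a - b * c / a) / 2"

text \<open>a, b, c lie on the circle |z|^2 = R about 0. Stating this as cnj z = R / z lets all
  conjugates be eliminated by rewriting, which reduces each identity below to one between
  rational functions.\<close>

locale circle_triangle =
  fixes a b c R :: complex
  assumes nonzero: "a \<noteq> 0" "b \<noteq> 0" "c \<noteq> 0" "R \<noteq> 0"
    and on_circle: "cnj a = R / a" "cnj b = R / b" "cnj c = R / c"
    and real_radius: "cnj R = R"
begin

lemma rotate: "circle_triangle b c a R"
  using nonzero on_circle real_radius by unfold_locales

lemma cmod_eq: "cmod b = cmod a" "cmod c = cmod a"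
proof -
  have "complex_of_real (cmod z ^ 2) = R" if "z \<noteq> 0" "cnj z = R / z" for z
    using that by (simp only: complex_norm_square) simp
  then have "cmod b ^ 2 = cmod a ^ 2" "cmod c ^ 2 = cmod a ^ 2"
    using nonzero on_circle by (metis of_real_eq_iff)+
  then show "cmod b = cmod a" "cmod c = cmod a"
    by simp_all
qed

lemmas cnj_eliminate = complex_cnj_mult complex_cnj_divide complex_cnj_add complex_cnj_diff
  complex_cnj_numeral complex_cnj_one complex_cnj_zero complex_cnj_minus complex_cnj_power
  complex_cnj_cnj on_circle real_radius altitude_foot_def

lemma altitude_foot_on_altitude: "Im ((altitude_foot a b c - a) * cnj (b + c)) = 0"
  unfolding Im_eq_0_iff_cnj using nonzero
  by (simp only: cnj_eliminate) ((simp add: field_simps); algebra?)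

lemma altitude_foot_perpendicular: "Re (altitude_foot a b c * cnj (b + c)) = 0"
  unfolding Re_eq_0_iff_cnj using nonzero
  by (simp only: cnj_eliminate) ((simp add: field_simps); algebra?)

lemma sigma2_nonzero:
  assumes "a + b + c \<noteq> 0"
  shows "a * b + b * c + c * a \<noteq> 0"
proof
  assume "a * b + b * c + c * a = 0"
  moreover have "cnj (a + b + c) = R * (a * b + b * c + c * a) / (a * b * c)"
    using nonzero by (simp only: cnj_eliminate) (simp add: field_simps)
  ultimately have "cnj (a + b + c) = 0"
    by simp
  with assms show False
    by (metis complex_cnj_zero_iff)
qed

lemma altitude_feet_similar:
  "(altitude_foot c a b - altitude_foot a b c) * cnj (altitude_foot b c a - altitude_foot a b c) =
   (a * b + b * c + c * a) * cnj (a * b + b * c + c * a) / (4 * R ^ 2) *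
     cnj ((c - a) * cnj (b - a))"
  using nonzero by (simp only: cnj_eliminate) ((simp add: field_simps); algebra?)

lemma altitude_foot_minus_half_sum:
  "altitude_foot a b c - (a + b + c) / 2 = - (a * b + b * c + c * a) / (2 * a)"
  using nonzero by ((simp add: altitude_foot_def field_simps); algebra?)

lemma altitude_feet_diff:
  "altitude_foot b c a - altitude_foot c a b = (b - c) * (a * b + b * c + c * a) / (2 * b * c)"
  using nonzero by ((simp add: altitude_foot_def field_simps); algebra?)

lemma cnj_altitude_feet_diff:
  "cnj (altitude_foot c a b - altitude_foot b c a) = R * (b - c) * (a + b + c) / (2 * a * b * c)"
  using nonzero by (simp only: cnj_eliminate) ((simp add: field_simps); algebra?)

lemma side_foot_on_side:
  assumes "a + b + c \<noteq> 0"
  shows "Im ((altitude_foot b c a * altitude_foot c a b / (a + b + c) - altitude_foot b c a) *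
    cnj (altitude_foot c a b - altitude_foot b c a)) = 0"
proof -
  have "(altitude_foot b c a * altitude_foot c a b / h - altitude_foot b c a) *
      (R * (b - c) * h / (2 * a * b * c)) =
    - R * (b - c) * (b^2 - c * a) * (c^2 + a * b + 2 * a * c + 2 * b * c) / (8 * a * b^2 * c^2)"
    if "h \<noteq> 0" "h = a + b + c" for h
    using nonzero that(1) apply (simp add: altitude_foot_def field_simps)
    using that(2) by algebra
  then have "(altitude_foot b c a * altitude_foot c a b / (a + b + c) - altitude_foot b c a) *
      cnj (altitude_foot c a b - altitude_foot b c a) =
    - R * (b - c) * (b^2 - c * a) * (c^2 + a * b + 2 * a * c + 2 * b * c) / (8 * a * b^2 * c^2)"
    unfolding cnj_altitude_feet_diff using assms by simp
  moreover have "Im (- R * (b - c) * (b^2 - c * a) * (c^2 + a * b + 2 * a * c + 2 * b * c) /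
      (8 * a * b^2 * c^2)) = 0"
    unfolding Im_eq_0_iff_cnj using nonzero
    by (simp only: cnj_eliminate) ((simp add: field_simps); algebra?)
  ultimately show ?thesis
    by simp
qed

lemma side_foot_perpendicular:
  assumes "a + b + c \<noteq> 0"
  shows "Re ((altitude_foot b c a * altitude_foot c a b / (a + b + c)) *
    cnj (altitude_foot c a b - altitude_foot b c a)) = 0"
proof -
  have "(altitude_foot b c a * altitude_foot c a b / h) * (R * (b - c) * h / (2 * a * b * c)) =
    R * (b - c) * (b^2 - c * a) * (c^2 - a * b) / (8 * a * b^2 * c^2)"
    if "h \<noteq> 0" for h
    using nonzero that by ((simp add: altitude_foot_def field_simps); algebra?)
  then have "(altitude_foot b c a * altitude_foot c a b / (a + b + c)) *
      cnj (altitude_foot c a b - altitude_foot b c a) =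
    R * (b - c) * (b^2 - c * a) * (c^2 - a * b) / (8 * a * b^2 * c^2)"
    unfolding cnj_altitude_feet_diff using assms by simp
  moreover have "Re (R * (b - c) * (b^2 - c * a) * (c^2 - a * b) / (8 * a * b^2 * c^2)) = 0"
    unfolding Re_eq_0_iff_cnj using nonzero
    by (simp only: cnj_eliminate) ((simp add: field_simps); algebra?)
  ultimately show ?thesis
    by simp
qed

lemma altitude_feet_sum:
  "altitude_foot a b c + altitude_foot b c a + altitude_foot c a b - (a + b + c) - (a + b + c) / 2 =
     - ((a * b + b * c + c * a)^2) / (2 * a * b * c)"
  using nonzero by ((simp add: altitude_foot_def field_simps); algebra?)

lemma side_reflection_collinear:
  assumes "a + b + c \<noteq> 0"
  shows "Im ((2 * (altitude_foot b c a * altitude_foot c a b / (a + b + c)) - (a + b + c) / 2) *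
     cnj (altitude_foot a b c + altitude_foot b c a + altitude_foot c a b - (a + b + c) -
       (a + b + c) / 2)) = 0"
proof -
  have "2 * (altitude_foot b c a * altitude_foot c a b / h) - h / 2 =
      - (b^2 + b * c + c^2) * (a * b + b * c + c * a) / (2 * b * c * h)"
    if "h \<noteq> 0" "h = a + b + c" for h
    using nonzero that(1) apply (simp add: altitude_foot_def field_simps)
    using that(2) by algebra
  then have x: "2 * (altitude_foot b c a * altitude_foot c a b / (a + b + c)) - (a + b + c) / 2 =
      - (b^2 + b * c + c^2) * (a * b + b * c + c * a) / (2 * b * c * (a + b + c))"
    using assms by simp
  have cnj_y: "cnj (- ((a * b + b * c + c * a)^2) / (2 * a * b * c)) =
      - R * (a + b + c)^2 / (2 * a * b * c)"
    using nonzero by (simp only: cnj_eliminate) ((simp add: field_simps); algebra?)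
  have "- (b^2 + b * c + c^2) * (a * b + b * c + c * a) / (2 * b * c * h) *
      (- R * h^2 / (2 * a * b * c)) =
    R * (b^2 + b * c + c^2) * (a * b + b * c + c * a) * h / (4 * a * b^2 * c^2)"
    if "h \<noteq> 0" for h
    using nonzero that by ((simp add: field_simps); algebra?)
  then have "(2 * (altitude_foot b c a * altitude_foot c a b / (a + b + c)) - (a + b + c) / 2) *
      cnj (altitude_foot a b c + altitude_foot b c a + altitude_foot c a b - (a + b + c) -
        (a + b + c) / 2) =
    R * (b^2 + b * c + c^2) * (a * b + b * c + c * a) * (a + b + c) / (4 * a * b^2 * c^2)"
    unfolding x altitude_feet_sum cnj_y using assms by simp
  moreover have "Im (R * (b^2 + b * c + c^2) * (a * b + b * c + c * a) * (a + b + c) /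
      (4 * a * b^2 * c^2)) = 0"
    unfolding Im_eq_0_iff_cnj using nonzero
    by (simp only: cnj_eliminate) ((simp add: field_simps); algebra?)
  ultimately show ?thesis
    by simp
qed

lemma altitude_foot_dist_half_sum:
  "cmod (altitude_foot a b c - (a + b + c) / 2) = cmod (a * b + b * c + c * a) / (2 * cmod a)"
  unfolding altitude_foot_minus_half_sum norm_divide norm_minus_cancel by (simp add: norm_mult)

lemma circumcenter_eq_center:
  assumes "\<not> collinear {point_of (zO + a), point_of (zO + b), point_of (zO + c)}"
  shows "circumcenter (point_of (zO + a)) (point_of (zO + b)) (point_of (zO + c)) = point_of zO"
  by (rule circumcenter_eqI[OF assms]) (simp_all add: dist_complex_of cmod_eq)

lemma orthocenter_eq_sum:
  assumes "\<not> collinear {point_of (zO + a), point_of (zO + b), point_of (zO + c)}"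
  shows "orthocenter (point_of (zO + a)) (point_of (zO + b)) (point_of (zO + c)) =
    point_of (zO + (a + b + c))"
proof -
  have "orthocenter (point_of (zO + a)) (point_of (zO + b)) (point_of (zO + c)) =
      point_of (zO + a) + point_of (zO + b) + point_of (zO + c) - 2 *\<^sub>R point_of zO"
    by (rule orthocenter_sylvester[OF assms]) (simp_all add: dist_complex_of cmod_eq)
  also have "\<dots> = point_of (zO + (a + b + c))"
    by (rule complex_of_eq_iff[THEN iffD1]) (simp add: algebra_simps)
  finally show ?thesis .
qed

lemma foot_center_altitude:
  assumes "b + c \<noteq> 0"
  shows "foot (point_of zO) (point_of (zO + a)) (point_of (zO + (a + b + c))) =
    point_of (zO + altitude_foot a b c)"
proof (rule foot_eqI)
  show AH: "point_of (zO + a) \<noteq> point_of (zO + (a + b + c))"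
    using assms by (simp add: add.assoc)
  show "point_of (zO + altitude_foot a b c) \<in>
      affine hull {point_of (zO + a), point_of (zO + (a + b + c))}"
    unfolding in_affine_hull_2_iff_Im[OF AH] using altitude_foot_on_altitude
    by (simp add: algebra_simps)
  show "(point_of zO - point_of (zO + altitude_foot a b c)) \<bullet>
      (point_of (zO + (a + b + c)) - point_of (zO + a)) = 0"
    using altitude_foot_perpendicular by (simp add: inner_complex_of algebra_simps)
qed

lemma foot_center_altitudes:
  assumes "b + c \<noteq> 0" "c + a \<noteq> 0" "a + b \<noteq> 0"
  shows "foot (point_of zO) (point_of (zO + a)) (point_of (zO + (a + b + c))) =
      point_of (zO + altitude_foot a b c)"
    and "foot (point_of zO) (point_of (zO + b)) (point_of (zO + (a + b + c))) =
      point_of (zO + altitude_foot b c a)"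
    and "foot (point_of zO) (point_of (zO + c)) (point_of (zO + (a + b + c))) =
      point_of (zO + altitude_foot c a b)"
proof -
  interpret bca: circle_triangle b c a R by (rule rotate)
  interpret cab: circle_triangle c a b R by (rule bca.rotate)
  have rot: "b + c + a = a + b + c" "c + a + b = a + b + c"
    by (simp_all add: ac_simps)
  show "foot (point_of zO) (point_of (zO + a)) (point_of (zO + (a + b + c))) =
      point_of (zO + altitude_foot a b c)"
    by (rule foot_center_altitude[OF assms(1)])
  show "foot (point_of zO) (point_of (zO + b)) (point_of (zO + (a + b + c))) =
      point_of (zO + altitude_foot b c a)"
    by (rule bca.foot_center_altitude[OF assms(2), unfolded rot])
  show "foot (point_of zO) (point_of (zO + c)) (point_of (zO + (a + b + c))) =
      point_of (zO + altitude_foot c a b)"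
    by (rule cab.foot_center_altitude[OF assms(3), unfolded rot])
qed

lemma altitude_feet_not_collinear:
  assumes nc: "\<not> collinear {point_of (zO + a), point_of (zO + b), point_of (zO + c)}"
    and h: "a + b + c \<noteq> 0"
  shows "\<not> collinear {point_of (zO + altitude_foot a b c), point_of (zO + altitude_foot b c a),
    point_of (zO + altitude_foot c a b)}"
proof -
  define z where "z = (c - a) * cnj (b - a)"
  define \<sigma> where "\<sigma> = a * b + b * c + c * a"
  define r where "r = Re R"
  have "Im z \<noteq> 0"
    using nc by (simp add: collinear_3_iff_Im z_def)
  have R: "R = of_real r"
    using real_radius by (simp add: complex_eq_iff r_def)
  define k where "k = cmod \<sigma> ^ 2 / (4 * r ^ 2)"
  have "k > 0"
    using sigma2_nonzero[OF h] nonzero(4) by (simp add: k_def \<sigma>_def R)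
  have "\<sigma> * cnj \<sigma> / (4 * R ^ 2) = of_real k"
    unfolding k_def R complex_norm_square[symmetric] by simp
  then have "Im ((altitude_foot c a b - altitude_foot a b c) *
      cnj (altitude_foot b c a - altitude_foot a b c)) = - k * Im z"
    unfolding altitude_feet_similar \<sigma>_def[symmetric] z_def[symmetric] by simp
  with \<open>k > 0\<close> \<open>Im z \<noteq> 0\<close> show ?thesis
    by (simp add: collinear_3_iff_Im)
qed

lemma altitude_feet_equidistant:
  fixes zO :: complex
  defines "N \<equiv> point_of (zO + (a + b + c) / 2)"
  shows "dist N (point_of (zO + altitude_foot a b c)) =
      dist N (point_of (zO + altitude_foot b c a))"
    and "dist N (point_of (zO + altitude_foot b c a)) =
      dist N (point_of (zO + altitude_foot c a b))"
proof -
  interpret bca: circle_triangle b c a R by (rule rotate)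
  interpret cab: circle_triangle c a b R by (rule bca.rotate)
  have rot: "b + c + a = a + b + c" "c + a + b = a + b + c"
    "b * c + c * a + a * b = a * b + b * c + c * a"
    "c * a + a * b + b * c = a * b + b * c + c * a"
    by (simp_all add: ac_simps)
  have "dist N (point_of (zO + altitude_foot a b c)) = cmod (a * b + b * c + c * a) / (2 * cmod a)"
    "dist N (point_of (zO + altitude_foot b c a)) = cmod (a * b + b * c + c * a) / (2 * cmod a)"
    "dist N (point_of (zO + altitude_foot c a b)) = cmod (a * b + b * c + c * a) / (2 * cmod a)"
    using altitude_foot_dist_half_sum bca.altitude_foot_dist_half_sum
      cab.altitude_foot_dist_half_sum
    by (simp_all add: N_def dist_complex_of norm_minus_commute rot cmod_eq)
  then show "dist N (point_of (zO + altitude_foot a b c)) =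
      dist N (point_of (zO + altitude_foot b c a))"
    "dist N (point_of (zO + altitude_foot b c a)) =
      dist N (point_of (zO + altitude_foot c a b))"
    by simp_all
qed

lemma altitude_feet_circumcenter:
  assumes "\<not> collinear {point_of (zO + a), point_of (zO + b), point_of (zO + c)}"
    and "a + b + c \<noteq> 0"
  shows "circumcenter (point_of (zO + altitude_foot a b c)) (point_of (zO + altitude_foot b c a))
      (point_of (zO + altitude_foot c a b)) = point_of (zO + (a + b + c) / 2)"
  using altitude_feet_not_collinear[OF assms] altitude_feet_equidistant
  by (rule circumcenter_eqI)

lemma altitude_feet_orthocenter:
  assumes "\<not> collinear {point_of (zO + a), point_of (zO + b), point_of (zO + c)}"
    and "a + b + c \<noteq> 0"
  shows "orthocenter (point_of (zO + altitude_foot a b c)) (point_of (zO + altitude_foot b c a))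
      (point_of (zO + altitude_foot c a b)) =
    point_of (zO + (altitude_foot a b c + altitude_foot b c a + altitude_foot c a b -
      (a + b + c)))"
proof -
  have "orthocenter (point_of (zO + altitude_foot a b c)) (point_of (zO + altitude_foot b c a))
      (point_of (zO + altitude_foot c a b)) = point_of (zO + altitude_foot a b c) +
      point_of (zO + altitude_foot b c a) + point_of (zO + altitude_foot c a b) -
      2 *\<^sub>R point_of (zO + (a + b + c) / 2)"
    using altitude_feet_not_collinear[OF assms] altitude_feet_equidistant
    by (rule orthocenter_sylvester)
  also have "\<dots> = point_of (zO + (altitude_foot a b c + altitude_foot b c a +
      altitude_foot c a b - (a + b + c)))"
    by (rule complex_of_eq_iff[THEN iffD1]) (simp add: algebra_simps)
  finally show ?thesis .
qed

lemma reflect_center_side: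
  assumes "b \<noteq> c" "a + b + c \<noteq> 0"
  shows "reflect_line (point_of zO) (point_of (zO + altitude_foot b c a))
      (point_of (zO + altitude_foot c a b)) =
    point_of (zO + 2 * (altitude_foot b c a * altitude_foot c a b / (a + b + c)))"
proof -
  have "altitude_foot b c a - altitude_foot c a b \<noteq> 0"
    unfolding altitude_feet_diff using assms(1) nonzero sigma2_nonzero[OF assms(2)] by simp
  then have BC: "point_of (zO + altitude_foot b c a) \<noteq> point_of (zO + altitude_foot c a b)"
    by simp
  have "foot (point_of zO) (point_of (zO + altitude_foot b c a))
      (point_of (zO + altitude_foot c a b)) =
      point_of (zO + altitude_foot b c a * altitude_foot c a b / (a + b + c))"
  proof (rule foot_eqI[OF BC])
    show "point_of (zO + altitude_foot b c a * altitude_foot c a b / (a + b + c)) \<in>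
        affine hull {point_of (zO + altitude_foot b c a), point_of (zO + altitude_foot c a b)}"
      unfolding in_affine_hull_2_iff_Im[OF BC] using side_foot_on_side[OF assms(2)] by simp
    show "(point_of zO -
        point_of (zO + altitude_foot b c a * altitude_foot c a b / (a + b + c))) \<bullet>
        (point_of (zO + altitude_foot c a b) - point_of (zO + altitude_foot b c a)) = 0"
      unfolding inner_complex_of using side_foot_perpendicular[OF assms(2)] by simp
  qed
  then show ?thesis
    unfolding reflect_line_def by (intro complex_of_eq_iff[THEN iffD1]) (simp add: algebra_simps)
qed

lemma altitude_feet_circumcenter_ne_orthocenter:
  assumes "a + b + c \<noteq> 0"
  shows "point_of (zO + (a + b + c) / 2) \<noteq>
    point_of (zO + (altitude_foot a b c + altitude_foot b c a + altitude_foot c a b -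
      (a + b + c)))"
proof -
  have "altitude_foot a b c + altitude_foot b c a + altitude_foot c a b - (a + b + c) -
      (a + b + c) / 2 \<noteq> 0"
    unfolding altitude_feet_sum using sigma2_nonzero[OF assms] nonzero by simp
  then show ?thesis
    by (metis add_left_cancel point_of_eq_iff right_minus_eq)
qed

lemma side_reflection_on_euler_line:
  assumes "a + b + c \<noteq> 0"
  shows "point_of (zO + 2 * (altitude_foot b c a * altitude_foot c a b / (a + b + c))) \<in>
    affine hull {point_of (zO + (a + b + c) / 2),
      point_of (zO + (altitude_foot a b c + altitude_foot b c a + altitude_foot c a b -
        (a + b + c)))}"
  unfolding in_affine_hull_2_iff_Im[OF altitude_feet_circumcenter_ne_orthocenter[OF assms]]
  using side_reflection_collinear[OF assms] by simp

lemma steiner_line_center_eq_euler_line: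
  assumes nc: "\<not> collinear {point_of (zO + a), point_of (zO + b), point_of (zO + c)}"
    and h: "a + b + c \<noteq> 0"
  shows "steiner_line (point_of zO) (point_of (zO + altitude_foot a b c))
      (point_of (zO + altitude_foot b c a)) (point_of (zO + altitude_foot c a b)) =
    euler_line (point_of (zO + altitude_foot a b c))
      (point_of (zO + altitude_foot b c a)) (point_of (zO + altitude_foot c a b))"
proof -
  interpret bca: circle_triangle b c a R by (rule rotate)
  interpret cab: circle_triangle c a b R by (rule bca.rotate)
  have rot: "b + c + a = a + b + c" "c + a + b = a + b + c"
    by (simp_all add: ac_simps)
  define p q s
    where "p = altitude_foot a b c" and "q = altitude_foot b c a" and "s = altitude_foot c a b"
  have rot_feet: "q + s + p = p + q + s" "s + p + q = p + q + s"
    by (simp_all add: ac_simps)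
  have "\<not> collinear {point_of (zO + p), point_of (zO + q), point_of (zO + s)}"
    using altitude_feet_not_collinear[OF nc h] by (simp add: p_def q_def s_def)
  then have "p \<noteq> q" "q \<noteq> s" "s \<noteq> p"
    by (auto simp: insert_commute)
  have "b \<noteq> c" "c \<noteq> a" "a \<noteq> b"
    using nc by (auto simp: insert_commute)
  note feet = p_def[symmetric] q_def[symmetric] s_def[symmetric]
  note reflections = reflect_center_side[OF \<open>b \<noteq> c\<close> h, unfolded feet]
    bca.reflect_center_side[unfolded rot, OF \<open>c \<noteq> a\<close> h, unfolded feet]
    cab.reflect_center_side[unfolded rot, OF \<open>a \<noteq> b\<close> h, unfolded feet]
  note on_euler_line = side_reflection_on_euler_line[OF h, unfolded feet]
    bca.side_reflection_on_euler_line[unfolded rot, OF h, unfolded feet rot_feet]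
    cab.side_reflection_on_euler_line[unfolded rot, OF h, unfolded feet rot_feet]
  have "\<not> (q * s = s * p \<and> s * p = p * q)"
  proof
    assume "q * s = s * p \<and> s * p = p * q"
    then have "s * (q - p) = 0" "p * (s - q) = 0"
      by (auto simp: algebra_simps)
    with \<open>p \<noteq> q\<close> \<open>q \<noteq> s\<close> \<open>s \<noteq> p\<close> show False
      by simp
  qed
  then have not_all_eq:
    "\<not> (point_of (zO + 2 * (q * s / (a + b + c))) = point_of (zO + 2 * (s * p / (a + b + c))) \<and>
      point_of (zO + 2 * (s * p / (a + b + c))) = point_of (zO + 2 * (p * q / (a + b + c))))"
    using h by simp
  show ?thesis
    unfolding steiner_line_def euler_line_def feet reflections
      altitude_feet_circumcenter[OF nc h, unfolded feet]
      altitude_feet_orthocenter[OF nc h, unfolded feet]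
    by (rule affine_hull_3_eq_line[OF altitude_feet_circumcenter_ne_orthocenter[OF h, unfolded feet]
          on_euler_line not_all_eq])
qed

end

lemma triangle_on_circle:
  fixes A B C :: point
  assumes nc: "\<not> collinear {A, B, C}"
  obtains zO a b c R where "circle_triangle a b c R"
    and "A = point_of (zO + a)" "B = point_of (zO + b)" "C = point_of (zO + c)"
proof -
  obtain Q where Q: "dist Q A = dist Q B" "dist Q B = dist Q C"
    using equidistant_point_exists[OF nc] by blast
  define zO where "zO = complex_of Q"
  define a b c
    where "a = complex_of A - zO" and "b = complex_of B - zO" and "c = complex_of C - zO"
  define R where "R = complex_of_real (cmod a ^ 2)"
  have ABC: "A = point_of (zO + a)" "B = point_of (zO + b)" "C = point_of (zO + c)"
    by (simp_all add: a_def b_def c_def)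
  have cmod: "cmod b = cmod a" "cmod c = cmod a"
    using Q by (simp_all add: dist_complex_of a_def b_def c_def zO_def norm_minus_commute)
  have "a \<noteq> 0"
  proof
    assume "a = 0"
    then have "b = 0" "c = 0"
      using cmod by simp_all
    with \<open>a = 0\<close> show False
      using nc by (simp add: ABC)
  qed
  have on_circle: "cnj z = R / z" if "cmod z = cmod a" for z
  proof -
    have "R = z * cnj z"
      unfolding R_def that[symmetric] by (rule complex_norm_square)
    moreover have "z \<noteq> 0"
      using that \<open>a \<noteq> 0\<close> by auto
    ultimately show ?thesis
      by simp
  qed
  have "circle_triangle a b c R"
    using \<open>a \<noteq> 0\<close> cmod by unfold_locales (auto simp: on_circle R_def)
  then show thesis
    using that ABC by blast
qed

theorem lemma3p2:
  fixes A B C :: point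
  assumes "\<not> collinear {A, B, C}"
    and "orthocenter A B C \<noteq> A" "orthocenter A B C \<noteq> B" "orthocenter A B C \<noteq> C"
    and "circumcenter A B C \<noteq> orthocenter A B C"
  shows "steiner_line (circumcenter A B C)
           (foot (circumcenter A B C) A (orthocenter A B C))
           (foot (circumcenter A B C) B (orthocenter A B C))
           (foot (circumcenter A B C) C (orthocenter A B C))
         = euler_line
           (foot (circumcenter A B C) A (orthocenter A B C))
           (foot (circumcenter A B C) B (orthocenter A B C))
           (foot (circumcenter A B C) C (orthocenter A B C))"
proof -
  obtain zO a b c R where "circle_triangle a b c R"
    and ABC: "A = point_of (zO + a)" "B = point_of (zO + b)" "C = point_of (zO + c)"
    using triangle_on_circle[OF assms(1)] .
  then interpret circle_triangle a b c R
    by simp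
  have nc: "\<not> collinear {point_of (zO + a), point_of (zO + b), point_of (zO + c)}"
    using assms(1) by (simp add: ABC)
  note O = circumcenter_eq_center[OF nc] and H = orthocenter_eq_sum[OF nc]
  have sums: "b + c \<noteq> 0" "c + a \<noteq> 0" "a + b \<noteq> 0" "a + b + c \<noteq> 0"
    using assms(2-5) unfolding ABC O H by (auto simp: algebra_simps)
  show ?thesis
    unfolding ABC O H foot_center_altitudes[OF sums(1-3)]
    by (rule steiner_line_center_eq_euler_line[OF nc sums(4)])
qed

end
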